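(* Let $w$ be a perfectly clustering word over a totally ordered alphabet having a palindromic special factorization $w=a_1\pi_1a_2\pi_2\cdots\pi_{k-1}a_k$. Then for every $s\in\{1,\dots,k-1\}$, the word $\pi_s$ is empty if and only if $|w|_{a_1}+\cdots+|w|_{a_s}=|w|_{a_{s+1}}+\cdots+|w|_{a_k}$.
   Context: $|w|_a$ is the number of occurrences of the letter $a$ in $w$. A special factorization of $w$ is a factorization $w=a_1\pi_1a_2\cdots\pi_{k-1}a_k$ where the set of letters occurring in $w$ is $\{a_1<\cdots<a_k\}$ and $\pi_1,\dots,\pi_{k-1}$ are words; it is palindromic if every $\pi_i$ is a palindrome. Lexicographic order: a proper prefix is smaller. For a primitive word $v$ of length $n$ with conjugates $v_1<\cdots<v_n$, $\mathrm{bw}(v)$ is the word formed by the last letters of $v_1,\dots,v_n$; $v$ is perfectly clustering if it is primitive and $\mathrm{bw}(v)$ is weakly decreasing. *)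

theory Defs
  imports Main
begin

text \<open>Lexicographic order on words: a proper prefix is smaller.\<close>
definition lex_less :: "'a::linorder list \<Rightarrow> 'a list \<Rightarrow> bool" where
  "lex_less u v \<longleftrightarrow> (u, v) \<in> lexord {(x, y). x < y}"

definition primitive :: "'a list \<Rightarrow> bool" where
  "primitive v \<longleftrightarrow> v \<noteq> [] \<and> \<not> (\<exists>u k. k \<ge> 2 \<and> v = concat (replicate k u))"

definition conjugates :: "'a list \<Rightarrow> 'a list set" where
  "conjugates v = {rotate i v | i. i < length v}"

text \<open>Burrows-Wheeler transform: last letters of the conjugates listed in
  increasing lexicographic order.\<close>
definition bw :: "'a::linorder list \<Rightarrow> 'a list" where
  "bw v = map last (THE l. set l = conjugates v \<and> distinct l \<and> sorted_wrt lex_less l)"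

definition perfectly_clustering :: "'a::linorder list \<Rightarrow> bool" where
  "perfectly_clustering v \<longleftrightarrow> primitive v \<and> sorted_wrt (\<ge>) (bw v)"

text \<open>Special factorization w = a_1 pi_1 a_2 ... pi_(k-1) a_k, letters indexed 1..k.\<close>
definition special_factorization ::
  "'a::linorder list \<Rightarrow> nat \<Rightarrow> (nat \<Rightarrow> 'a) \<Rightarrow> (nat \<Rightarrow> 'a list) \<Rightarrow> bool" where
  "special_factorization w k a \<pi> \<longleftrightarrow>
     k \<ge> 1 \<and>
     (\<forall>i j. 1 \<le> i \<longrightarrow> i < j \<longrightarrow> j \<le> k \<longrightarrow> a i < a j) \<and>
     set w = a ` {1..k} \<and>
     w = concat (map (\<lambda>i. a i # \<pi> i) [1..<k]) @ [a k]"

definition palindromic_special_factorization ::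
  "'a::linorder list \<Rightarrow> nat \<Rightarrow> (nat \<Rightarrow> 'a) \<Rightarrow> (nat \<Rightarrow> 'a list) \<Rightarrow> bool" where
  "palindromic_special_factorization w k a \<pi> \<longleftrightarrow>
     special_factorization w k a \<pi> \<and> (\<forall>i\<in>{1..<k}. rev (\<pi> i) = \<pi> i)"

end

(* Let r j be the rank of the conjugate rotate j w among all conjugates of w.  As w is
   primitive, r is a permutation of {0..<n}, so 2 * (SUM j<n. r j) = n * (n - 1).  Perfect
   clustering (the last letters of the sorted conjugates decrease) forces
   r (j + 1) - r j = |w|_{>w!j} - |w|_{<w!j}: the increment depends only on the letter w ! j.
   Along a palindrome pi_t, mirror positions therefore have constant rank sum, namely the
   rank sum of the two bordering letters a_t and a_(t+1), which is n + e_t + e_(t+1), where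
   e_t counts the conjugates starting with a_t that are smaller than the one starting at
   a_t itself.  Summing over all blocks exceeds n * (n - 1) / 2 by a nonnegative combination
   of the e_t, so every e_t vanishes.  Then pi_s is empty iff the position after a_s is that
   of a_(s+1), iff their ranks |w|_{>a_s} and |w|_{<a_(s+1)} agree. *)

theory Submission
  imports Defs "HOL-Library.List_Lexorder"
begin

lemma lex_less_eq_less: "lex_less = (<)"
  by (intro ext) (simp add: lex_less_def list_less_def)

lemma snoc_less_snoc_iff:
  fixes xs ys :: "'a::linorder list"
  assumes "length xs = length ys"
  shows "xs @ [x] < ys @ [x] \<longleftrightarrow> xs < ys"
proof -
  have less: "us @ [x] < vs @ [x]" if "us < vs" "length us = length vs" for us vs :: "'a list"
    using that lex_append_rightI[of us vs _ "[x]" "[x]"] by (simp add: list_less_def lexord_lex)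
  show ?thesis
    using assms by (cases xs ys rule: linorder_cases) (auto dest: less)
qed

lemma card_lessThan_Suc_shift:
  assumes "Q n = Q 0"
  shows "card {i. i < n \<and> Q (Suc i)} = card {i. i < n \<and> Q i}"
proof -
  have card_conv_sum: "card {i. i < n \<and> P i} = (\<Sum>i<n. if P i then 1 else 0)" for P
  proof -
    have "card {i. i < n \<and> P i} = card ({..<n} \<inter> Collect P)"
      by (rule arg_cong[where f = card]) auto
    also have "\<dots> = (\<Sum>i<n. if P i then 1 else 0)"
      unfolding card_eq_sum by (subst sum.inter_restrict) simp_all
    finally show ?thesis .
  qed
  show ?thesis
    using sum.lessThan_Suc_shift[of "\<lambda>i. if Q i then 1 else (0::nat)" n] assms
    by (simp add: card_conv_sum)
qed

lemma length_filter_conv_sum_count_list: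
  "length (filter P xs) = (\<Sum>x\<in>{x \<in> set xs. P x}. count_list xs x)"
proof -
  have "length (filter P xs) = (\<Sum>x\<in>{x \<in> set xs. P x}. count_list (filter P xs) x)"
    by (rule sum_count_set[symmetric]) auto
  also have "\<dots> = (\<Sum>x\<in>{x \<in> set xs. P x}. count_list xs x)"
    by (rule sum.cong)
      (auto simp: count_list_eq_length_filter intro!: arg_cong[where f = length] filter_cong)
  finally show ?thesis .
qed

section \<open>Conjugates\<close>

lemma rotate_conv_nth_Cons:
  assumes "i < length w"
  shows "rotate i w = w ! i # tl (rotate i w)"
proof -
  have "w \<noteq> []"
    using assms by auto
  then have "rotate i w \<noteq> []" "hd (rotate i w) = w ! i"
    using assms by (simp_all add: hd_rotate_conv_nth)
  then show ?thesis
    by (cases "rotate i w") auto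
qed

lemma rotate_Suc_conv_snoc: "i < length w \<Longrightarrow> rotate (Suc i) w = tl (rotate i w) @ [w ! i]"
  by (metis rotate1.simps(2) rotate_Suc rotate_conv_nth_Cons)

lemma rotate_in_conjugates: "w \<noteq> [] \<Longrightarrow> rotate i w \<in> conjugates w"
  unfolding conjugates_def by (auto intro!: exI[of _ "i mod length w"] simp flip: rotate_conv_mod)

lemma rotate_self_imp_not_primitive:
  assumes "rotate d w = w" "0 < d" "d < length w"
  shows "\<not> primitive w"
proof -
  have "take d w @ drop d w = drop d w @ take d w"
    using assms by (metis append_take_drop_id mod_less rotate_drop_take)
  then obtain m n z where m: "concat (replicate m z) = take d w"
      and n: "concat (replicate n z) = drop d w"
    using comm_append_are_replicate by blast
  have "take d w \<noteq> []" "drop d w \<noteq> []"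
    using assms(2,3) by auto
  then have "m \<noteq> 0" "n \<noteq> 0"
    using m n by (metis concat.simps(1) replicate_0)+
  moreover have "w = concat (replicate (m + n) z)"
    by (simp add: replicate_add m n)
  ultimately show ?thesis
    unfolding primitive_def by (metis add_le_mono one_add_one less_one not_le)
qed

lemma primitive_inj_on_rotate:
  assumes "primitive w"
  shows "inj_on (\<lambda>i. rotate i w) {..<length w}"
proof -
  have "i = j" if "i \<le> j" "j < length w" "rotate i w = rotate j w" for i j
  proof (rule ccontr)
    assume "i \<noteq> j"
    have "w = rotate (length w - i) (rotate i w)"
      using that(1,2) by (simp add: rotate_rotate)
    also have "\<dots> = rotate (length w - i) (rotate j w)"
      using that by simp
    also have "\<dots> = rotate (j - i + length w) w"
      using that by (simp add: rotate_rotate add.commute)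
    also have "\<dots> = rotate (j - i) w"
      by (metis mod_add_self2 rotate_conv_mod)
    finally have "rotate (j - i) w = w" ..
    moreover have "0 < j - i" "j - i < length w"
      using \<open>i \<noteq> j\<close> that(1,2) by auto
    ultimately show False
      using rotate_self_imp_not_primitive assms by blast
  qed
  then show ?thesis
    by (intro inj_onI) (metis lessThan_iff nat_le_linear)
qed

lemma bw_conv_sorted_list_of_set:
  "bw w = map last (sorted_list_of_set (conjugates w))"
proof -
  have "finite (conjugates w)"
    unfolding conjugates_def by simp
  then have "(THE l. set l = conjugates w \<and> distinct l \<and> sorted_wrt lex_less l)
      = sorted_list_of_set (conjugates w)"
    by (intro the_equality)
      (auto simp: lex_less_eq_less strict_sorted_equal)
  then show ?thesis
    unfolding bw_def by simp
qed

lemma perfectly_clustering_last_antimono: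
  assumes "perfectly_clustering w" "u \<in> conjugates w" "v \<in> conjugates w" "u < v"
  shows "last v \<le> last u"
proof -
  define l where "l = sorted_list_of_set (conjugates w)"
  have "finite (conjugates w)"
    unfolding conjugates_def by simp
  then obtain i j where i: "i < length l" "l ! i = u" and j: "j < length l" "l ! j = v"
    using assms(2,3) by (metis in_set_conv_nth l_def set_sorted_list_of_set)
  have "sorted_wrt (<) l"
    unfolding l_def by (rule strict_sorted_list_of_set)
  then have "i < j"
    using i j \<open>u < v\<close> by (metis linorder_neqE_nat not_less_iff_gr_or_eq sorted_wrt_nth_less)
  moreover have "sorted_wrt (\<ge>) (map last l)"
    using assms(1) by (simp add: perfectly_clustering_def bw_conv_sorted_list_of_set l_def)
  ultimately show ?thesis
    using i j by (metis length_map nth_map order.strict_trans sorted_wrt_iff_nth_less)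
qed

lemma perfectly_clustering_last_rotate_antimono:
  assumes "perfectly_clustering w" "rotate i w < rotate j w"
  shows "last (rotate j w) \<le> last (rotate i w)"
proof -
  have "w \<noteq> []"
    using assms(1) by (simp add: perfectly_clustering_def primitive_def)
  then show ?thesis
    using perfectly_clustering_last_antimono rotate_in_conjugates assms by blast
qed

section \<open>Ranks of conjugates\<close>

definition conj_rank :: "'a::linorder list \<Rightarrow> nat \<Rightarrow> nat" where
  "conj_rank w j = card {i. i < length w \<and> rotate i w < rotate j w}"

definition letter_rank :: "'a::linorder list \<Rightarrow> nat \<Rightarrow> nat" where
  "letter_rank w j = card {i. i < length w \<and> w ! i = w ! j \<and> rotate i w < rotate j w}"

lemma conj_rank_conv_letter_rank:
  assumes "j < length w"
  shows "conj_rank w j = length (filter (\<lambda>c. c < w ! j) w) + letter_rank w j"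
proof -
  have "rotate i w < rotate j w \<longleftrightarrow> w ! i < w ! j \<or> w ! i = w ! j \<and> rotate i w < rotate j w"
    if i: "i < length w" for i
  proof -
    obtain u v where "rotate i w = w ! i # u" "rotate j w = w ! j # v"
      using rotate_conv_nth_Cons[OF i] rotate_conv_nth_Cons[OF assms] by blast
    then show ?thesis
      by auto
  qed
  then have "{i. i < length w \<and> rotate i w < rotate j w} =
      {i. i < length w \<and> w ! i < w ! j} \<union>
      {i. i < length w \<and> w ! i = w ! j \<and> rotate i w < rotate j w}"
    by blast
  moreover have "card \<dots> = card {i. i < length w \<and> w ! i < w ! j} +
      card {i. i < length w \<and> w ! i = w ! j \<and> rotate i w < rotate j w}"
    by (rule card_Un_disjoint) auto
  ultimately show ?thesis
    unfolding conj_rank_def letter_rank_def length_filter_conv_card by simp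
qed

lemma perfectly_clustering_conj_rank_Suc:
  assumes pc: "perfectly_clustering w" and j: "j < length w"
  shows "conj_rank w (Suc j) = length (filter (\<lambda>c. w ! j < c) w) + letter_rank w j"
proof -
  have last_Suc: "last (rotate (Suc i) w) = w ! i" if "i < length w" for i
    using rotate_Suc_conv_snoc[OF that] by simp
  have "rotate (Suc i) w < rotate (Suc j) w \<longleftrightarrow>
      w ! j < w ! i \<or> w ! i = w ! j \<and> rotate i w < rotate j w"
    if i: "i < length w" for i
  proof (cases "w ! i = w ! j")
    case True
    then show ?thesis
      using rotate_Suc_conv_snoc[OF i] rotate_Suc_conv_snoc[OF j] snoc_less_snoc_iff
        rotate_conv_nth_Cons[OF i] rotate_conv_nth_Cons[OF j]
      by (metis Cons_less_Cons length_rotate length_tl less_irrefl)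
  next
    case False
    then show ?thesis
      using perfectly_clustering_last_rotate_antimono[OF pc] last_Suc[OF i] last_Suc[OF j]
      by (metis linorder_neqE leD order.asym)
  qed
  then have "{i. i < length w \<and> rotate (Suc i) w < rotate (Suc j) w} =
      {i. i < length w \<and> w ! j < w ! i} \<union>
      {i. i < length w \<and> w ! i = w ! j \<and> rotate i w < rotate j w}"
    by blast
  moreover have "card \<dots> = card {i. i < length w \<and> w ! j < w ! i} +
      card {i. i < length w \<and> w ! i = w ! j \<and> rotate i w < rotate j w}"
    by (rule card_Un_disjoint) auto
  moreover have "conj_rank w (Suc j) =
      card {i. i < length w \<and> rotate (Suc i) w < rotate (Suc j) w}"
    unfolding conj_rank_def
    by (rule card_lessThan_Suc_shift[symmetric]) simp
  ultimately show ?thesis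
    unfolding letter_rank_def length_filter_conv_card by simp
qed

lemma perfectly_clustering_conj_rank_step:
  assumes "perfectly_clustering w" "j < length w"
  shows "conj_rank w (Suc j) + length (filter (\<lambda>c. c < w ! j) w) =
    conj_rank w j + length (filter (\<lambda>c. w ! j < c) w)"
  using perfectly_clustering_conj_rank_Suc[OF assms] conj_rank_conv_letter_rank[OF assms(2)]
  by simp

lemma conj_rank_less_length:
  assumes "j < length w"
  shows "conj_rank w j < length w"
proof -
  have "{i. i < length w \<and> rotate i w < rotate j w} \<subseteq> {..<length w} - {j}"
    by auto
  then have "conj_rank w j \<le> card ({..<length w} - {j})"
    unfolding conj_rank_def by (intro card_mono) auto
  then show ?thesis
    using assms by simp
qed

lemma conj_rank_strict_mono:
  assumes "i < length w" "rotate i w < rotate j w"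
  shows "conj_rank w i < conj_rank w j"
  unfolding conj_rank_def
proof (rule psubset_card_mono)
  show "{x. x < length w \<and> rotate x w < rotate i w} \<subset> {x. x < length w \<and> rotate x w < rotate j w}"
    using assms by auto
qed simp

lemma primitive_inj_on_conj_rank:
  assumes "primitive w"
  shows "inj_on (conj_rank w) {..<length w}"
proof (rule inj_onI)
  fix i j
  assume i: "i \<in> {..<length w}" and j: "j \<in> {..<length w}" and eq: "conj_rank w i = conj_rank w j"
  have "\<not> rotate i w < rotate j w" "\<not> rotate j w < rotate i w"
    using conj_rank_strict_mono eq i j by (metis lessThan_iff less_irrefl)+
  then have "rotate i w = rotate j w"
    by simp
  then show "i = j"
    using inj_onD[OF primitive_inj_on_rotate[OF assms] _ i j] by simp
qed

lemma primitive_sum_conj_rank: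
  assumes "primitive w"
  shows "2 * (\<Sum>j<length w. conj_rank w j) = length w * (length w - 1)"
proof -
  have "conj_rank w ` {..<length w} = {..<length w}"
    using endo_inj_surj primitive_inj_on_conj_rank[OF assms] conj_rank_less_length
    by (metis finite_lessThan image_subsetI lessThan_iff)
  then have "(\<Sum>j<length w. conj_rank w j) = (\<Sum>r<length w. r)"
    using sum.reindex[OF primitive_inj_on_conj_rank[OF assms], of id] by simp
  also have "2 * \<dots> = length w * (length w - 1)"
    by (cases "length w") (simp_all add: lessThan_Suc_atMost atLeast0AtMost[symmetric]
        double_gauss_sum[where 'a = nat, simplified] mult.commute)
  finally show ?thesis .
qed

lemma perfectly_clustering_conj_rank_palindrome:
  assumes pc: "perfectly_clustering w" and len: "p + l \<le> length w"
    and pal: "rev (take l (drop p w)) = take l (drop p w)" and "m \<le> l"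
  shows "conj_rank w (p + m) + conj_rank w (p + l - m) = conj_rank w p + conj_rank w (p + l)"
  using \<open>m \<le> l\<close>
proof (induction m)
  case 0
  then show ?case
    by simp
next
  case (Suc m)
  define j where "j = p + (l - Suc m)"
  have "w ! (p + m) = take l (drop p w) ! m"
    using Suc.prems len by simp
  also have "\<dots> = rev (take l (drop p w)) ! m"
    by (simp add: pal)
  also have "\<dots> = w ! j"
    using Suc.prems len by (simp add: rev_nth j_def)
  finally have mirror: "w ! (p + m) = w ! j" .
  have "p + m < length w" "j < length w" "Suc j = p + l - m"
    using Suc.prems len by (auto simp: j_def)
  then show ?case
    using Suc perfectly_clustering_conj_rank_step[OF pc, of "p + m"]
      perfectly_clustering_conj_rank_step[OF pc, of j] mirror
    by (simp add: j_def)
qed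

lemma perfectly_clustering_sum_conj_rank_palindrome:
  assumes "perfectly_clustering w" "p + l \<le> length w"
    and "rev (take l (drop p w)) = take l (drop p w)"
  shows "2 * (\<Sum>i=p..p + l. conj_rank w i) = Suc l * (conj_rank w p + conj_rank w (p + l))"
proof -
  have "(\<Sum>i=p..p + l. conj_rank w i) = (\<Sum>i=p..p + l. conj_rank w (p + l + p - i))"
    by (rule sum.atLeastAtMost_rev)
  then have "2 * (\<Sum>i=p..p + l. conj_rank w i) =
      (\<Sum>i=p..p + l. conj_rank w i + conj_rank w (p + l + p - i))"
    by (simp add: sum.distrib)
  also have "\<dots> = (\<Sum>i=p..p + l. conj_rank w p + conj_rank w (p + l))"
  proof (rule sum.cong)
    fix i
    assume "i \<in> {p..p + l}"
    then have "i - p \<le> l" "p + (i - p) = i" "p + l - (i - p) = p + l + p - i"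
      by auto
    then show "conj_rank w i + conj_rank w (p + l + p - i) = conj_rank w p + conj_rank w (p + l)"
      using perfectly_clustering_conj_rank_palindrome[OF assms, of "i - p"] by metis
  qed simp
  finally show ?thesis
    by simp
qed

section \<open>Special factorizations\<close>

text \<open>The (0-based) index of the letter \<open>a i\<close> in \<open>w = a 1 # \<pi> 1 @ a 2 # \<dots> @ [a k]\<close>.\<close>
definition letter_pos :: "(nat \<Rightarrow> 'a list) \<Rightarrow> nat \<Rightarrow> nat" where
  "letter_pos \<pi> i = (\<Sum>t=1..<i. Suc (length (\<pi> t)))"

lemma letter_pos_Suc: "1 \<le> i \<Longrightarrow> letter_pos \<pi> (Suc i) = Suc (letter_pos \<pi> i + length (\<pi> i))"
  unfolding letter_pos_def by (simp add: sum.atLeastLessThan_Suc)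

lemma letter_pos_mono: "i \<le> j \<Longrightarrow> letter_pos \<pi> i \<le> letter_pos \<pi> j"
  unfolding letter_pos_def by (rule sum_mono2) auto

lemma sum_atMost_letter_pos:
  "(\<Sum>i\<le>letter_pos \<pi> j. f i) =
    f 0 + (\<Sum>t=1..<j. \<Sum>i=Suc (letter_pos \<pi> t)..letter_pos \<pi> (Suc t). f i)"
proof (induction j)
  case 0
  then show ?case
    by (simp add: letter_pos_def)
next
  case (Suc j)
  show ?case
  proof (cases "j = 0")
    case True
    then show ?thesis
      by (simp add: letter_pos_def)
  next
    case False
    have "letter_pos \<pi> (Suc j) = letter_pos \<pi> j + Suc (length (\<pi> j))"
      using False by (simp add: letter_pos_Suc)
    moreover have "(\<Sum>i\<le>letter_pos \<pi> j + Suc l. f i) =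
        (\<Sum>i\<le>letter_pos \<pi> j. f i) + (\<Sum>i=Suc (letter_pos \<pi> j)..letter_pos \<pi> j + Suc l. f i)" for l
      using sum.ub_add_nat[of 0 "letter_pos \<pi> j" f "Suc l"] by (simp add: atLeast0AtMost)
    ultimately have "(\<Sum>i\<le>letter_pos \<pi> (Suc j). f i) =
        (\<Sum>i\<le>letter_pos \<pi> j. f i) + (\<Sum>i=Suc (letter_pos \<pi> j)..letter_pos \<pi> (Suc j). f i)"
      by presburger
    then show ?thesis
      using Suc.IH False by (simp add: sum.atLeastLessThan_Suc add.assoc)
  qed
qed

context
  fixes w :: "'a::linorder list" and k :: nat and a :: "nat \<Rightarrow> 'a" and \<pi> :: "nat \<Rightarrow> 'a list"
  assumes sf: "special_factorization w k a \<pi>"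
begin

lemma special_factorization_less_iff:
  assumes "t \<in> {1..k}" "u \<in> {1..k}"
  shows "a t < a u \<longleftrightarrow> t < u"
proof -
  have mono: "a i < a j" if "1 \<le> i" "i < j" "j \<le> k" for i j
    using sf that unfolding special_factorization_def by blast
  show ?thesis
    using assms mono[of t u] mono[of u t] by (cases t u rule: linorder_cases) auto
qed

lemma drop_letter_pos:
  assumes "1 \<le> i" "i \<le> k"
  shows "drop (letter_pos \<pi> i) w = concat (map (\<lambda>t. a t # \<pi> t) [i..<k]) @ [a k]"
  using assms
proof (induction i rule: nat_induct_at_least)
  case base
  then show ?case
    using sf by (simp add: special_factorization_def letter_pos_def)
next
  case (Suc i)
  then have "drop (letter_pos \<pi> i) w =
      a i # \<pi> i @ concat (map (\<lambda>t. a t # \<pi> t) [Suc i..<k]) @ [a k]"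
    by (simp add: upt_conv_Cons)
  moreover have "drop (letter_pos \<pi> (Suc i)) w = drop (Suc (length (\<pi> i))) (drop (letter_pos \<pi> i) w)"
    using Suc.hyps by (simp add: letter_pos_Suc add.commute)
  ultimately show ?case
    by simp
qed

lemma Suc_letter_pos_last: "Suc (letter_pos \<pi> k) = length w"
proof -
  have "1 \<le> k"
    using sf by (simp add: special_factorization_def)
  then have "length (drop (letter_pos \<pi> k) w) = 1"
    using drop_letter_pos by simp
  then show ?thesis
    by simp
qed

lemma letter_pos_less_length: "i \<le> k \<Longrightarrow> letter_pos \<pi> i < length w"
  using letter_pos_mono[of i k \<pi>] Suc_letter_pos_last by simp

lemma drop_letter_pos_Cons:
  assumes "1 \<le> i" "i < k"
  shows "drop (letter_pos \<pi> i) w = a i # \<pi> i @ drop (letter_pos \<pi> (Suc i)) w"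
  using drop_letter_pos[of i] drop_letter_pos[of "Suc i"] assms by (simp add: upt_conv_Cons)

lemma nth_letter_pos:
  assumes "1 \<le> i" "i \<le> k"
  shows "w ! letter_pos \<pi> i = a i"
proof -
  have "w ! letter_pos \<pi> i = drop (letter_pos \<pi> i) w ! 0"
    using letter_pos_less_length[OF assms(2)] by simp
  then show ?thesis
    using assms drop_letter_pos[of k] drop_letter_pos_Cons[of i] by (cases "i = k") simp_all
qed

lemma take_drop_letter_pos:
  assumes "1 \<le> i" "i < k"
  shows "take (length (\<pi> i)) (drop (Suc (letter_pos \<pi> i)) w) = \<pi> i"
proof -
  have "drop (Suc (letter_pos \<pi> i)) w = drop 1 (drop (letter_pos \<pi> i) w)"
    by simp
  then show ?thesis
    using drop_letter_pos_Cons[OF assms] by simp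
qed

lemma special_factorization_inj_on: "inj_on a {1..k}"
  by (rule inj_onI) (metis special_factorization_less_iff linorder_neqE_nat less_irrefl)

lemma length_filter_conv_sum_count_letters:
  assumes "I \<subseteq> {1..k}" "\<And>t. t \<in> {1..k} \<Longrightarrow> P (a t) \<longleftrightarrow> t \<in> I"
  shows "length (filter P w) = (\<Sum>i\<in>I. count_list w (a i))"
proof -
  have "set w = a ` {1..k}"
    using sf unfolding special_factorization_def by blast
  then have "{c \<in> set w. P c} = a ` I"
    using assms by auto
  moreover have "inj_on a I"
    using special_factorization_inj_on assms(1) by (rule inj_on_subset)
  ultimately show ?thesis
    by (simp add: length_filter_conv_sum_count_list sum.reindex)
qed

lemma length_filter_less_letter:
  "s < k \<Longrightarrow> length (filter (\<lambda>c. c < a (Suc s)) w) = (\<Sum>i=1..s. count_list w (a i))"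
  by (rule length_filter_conv_sum_count_letters) (auto simp: special_factorization_less_iff)

lemma length_filter_greater_letter:
  "1 \<le> s \<Longrightarrow> s \<le> k \<Longrightarrow> length (filter (\<lambda>c. a s < c) w) = (\<Sum>i=s+1..k. count_list w (a i))"
  by (rule length_filter_conv_sum_count_letters) (auto simp: special_factorization_less_iff)

lemma length_filter_greater_plus_less_letter:
  assumes "1 \<le> s" "s < k"
  shows "length (filter (\<lambda>c. a s < c) w) + length (filter (\<lambda>c. c < a (Suc s)) w) = length w"
proof -
  have "c < a (Suc s) \<longleftrightarrow> \<not> a s < c" if "c \<in> set w" for c
  proof -
    obtain u where "u \<in> {1..k}" "c = a u"
      using sf \<open>c \<in> set w\<close> unfolding special_factorization_def by blast
    then show ?thesis
      using assms special_factorization_less_iff by auto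
  qed
  then have "filter (\<lambda>c. c < a (Suc s)) w = filter (\<lambda>c. \<not> a s < c) w"
    by (rule filter_cong[OF refl])
  then show ?thesis
    by (simp add: sum_length_filter_compl)
qed

end

lemma palindromic_special_factorizationD:
  assumes "palindromic_special_factorization w k a \<pi>"
  shows "special_factorization w k a \<pi>" and "1 \<le> i \<Longrightarrow> i < k \<Longrightarrow> rev (\<pi> i) = \<pi> i"
  using assms by (simp_all add: palindromic_special_factorization_def)

context
  fixes w :: "'a::linorder list" and k :: nat and a :: "nat \<Rightarrow> 'a" and \<pi> :: "nat \<Rightarrow> 'a list"
  assumes pc: "perfectly_clustering w" and psf: "palindromic_special_factorization w k a \<pi>"
begin

lemma conj_rank_letter_pos:
  assumes "1 \<le> t" "t \<le> k"
  shows "conj_rank w (letter_pos \<pi> t) =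
    length (filter (\<lambda>c. c < a t) w) + letter_rank w (letter_pos \<pi> t)"
  using conj_rank_conv_letter_rank palindromic_special_factorizationD(1)[OF psf]
    letter_pos_less_length nth_letter_pos assms
  by metis

lemma conj_rank_Suc_letter_pos:
  assumes "1 \<le> t" "t \<le> k"
  shows "conj_rank w (Suc (letter_pos \<pi> t)) =
    length (filter (\<lambda>c. a t < c) w) + letter_rank w (letter_pos \<pi> t)"
  using perfectly_clustering_conj_rank_Suc[OF pc] palindromic_special_factorizationD(1)[OF psf]
    letter_pos_less_length nth_letter_pos assms
  by metis

lemma Nil_iff_conj_rank_eq:
  assumes s: "1 \<le> s" "s < k"
  shows "\<pi> s = [] \<longleftrightarrow> conj_rank w (Suc (letter_pos \<pi> s)) = conj_rank w (letter_pos \<pi> (Suc s))"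
proof -
  note sf = palindromic_special_factorizationD(1)[OF psf]
  have "Suc (letter_pos \<pi> s) \<le> letter_pos \<pi> (Suc s)" "letter_pos \<pi> (Suc s) < length w"
    using letter_pos_Suc[OF s(1), of \<pi>] letter_pos_less_length[OF sf, of "Suc s"] s
    by simp_all
  moreover have "inj_on (conj_rank w) {..<length w}"
    using pc by (simp add: perfectly_clustering_def primitive_inj_on_conj_rank)
  ultimately show ?thesis
    using letter_pos_Suc[OF s(1), of \<pi>] by (simp add: inj_on_eq_iff)
qed

lemma sum_conj_rank_block:
  assumes "1 \<le> t" "t < k"
  shows "2 * (\<Sum>i=Suc (letter_pos \<pi> t)..letter_pos \<pi> (Suc t). conj_rank w i) =
    Suc (length (\<pi> t)) *
      (length w + letter_rank w (letter_pos \<pi> t) + letter_rank w (letter_pos \<pi> (Suc t)))"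
proof -
  note sf = palindromic_special_factorizationD(1)[OF psf]
  define p where "p = Suc (letter_pos \<pi> t)"
  define l where "l = length (\<pi> t)"
  have end_block: "p + l = letter_pos \<pi> (Suc t)"
    using assms by (simp add: p_def l_def letter_pos_Suc)
  moreover have "p + l \<le> length w"
    using end_block letter_pos_less_length[OF sf, of "Suc t"] assms by simp
  moreover have "rev (take l (drop p w)) = take l (drop p w)"
    using take_drop_letter_pos[OF sf assms] palindromic_special_factorizationD(2)[OF psf assms]
    by (simp add: p_def l_def)
  ultimately have "2 * (\<Sum>i=p..letter_pos \<pi> (Suc t). conj_rank w i) =
      Suc l * (conj_rank w p + conj_rank w (letter_pos \<pi> (Suc t)))"
    using perfectly_clustering_sum_conj_rank_palindrome[OF pc] by metis
  moreover have "conj_rank w p + conj_rank w (letter_pos \<pi> (Suc t)) =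
      length w + letter_rank w (letter_pos \<pi> t) + letter_rank w (letter_pos \<pi> (Suc t))"
    using conj_rank_Suc_letter_pos[of t] conj_rank_letter_pos[of "Suc t"]
      length_filter_greater_plus_less_letter[OF sf assms] assms
    by (simp add: p_def)
  ultimately show ?thesis
    by (simp only: p_def l_def)
qed

lemma letter_rank_letter_pos_eq_0:
  assumes "1 \<le> t" "t \<le> k"
  shows "letter_rank w (letter_pos \<pi> t) = 0"
proof -
  note sf = palindromic_special_factorizationD(1)[OF psf]
  define n where "n = length w"
  define E where "E t = letter_rank w (letter_pos \<pi> t) + letter_rank w (letter_pos \<pi> (Suc t))" for t
  define B where "B t = (\<Sum>i=Suc (letter_pos \<pi> t)..letter_pos \<pi> (Suc t). conj_rank w i)" for t
  have n: "n = Suc (letter_pos \<pi> k)"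
    using Suc_letter_pos_last[OF sf] by (simp add: n_def)
  have "primitive w"
    using pc by (simp add: perfectly_clustering_def)
  have "2 * (\<Sum>i<n. conj_rank w i) = n * letter_pos \<pi> k"
    using primitive_sum_conj_rank[OF \<open>primitive w\<close>, folded n_def] n by simp
  moreover have "(\<Sum>i<n. conj_rank w i) = conj_rank w 0 + (\<Sum>t=1..<k. B t)"
    unfolding n lessThan_Suc_atMost B_def by (rule sum_atMost_letter_pos)
  moreover have "(\<Sum>t=1..<k. 2 * B t) = (\<Sum>t=1..<k. Suc (length (\<pi> t)) * (n + E t))"
    using sum_conj_rank_block by (intro sum.cong) (simp_all add: B_def E_def n_def add.assoc)
  then have "2 * (\<Sum>t=1..<k. B t) = n * letter_pos \<pi> k + (\<Sum>t=1..<k. Suc (length (\<pi> t)) * E t)"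
    by (simp add: letter_pos_def sum_distrib_left sum_distrib_right sum.distrib
        distrib_left mult.commute)
  ultimately have "conj_rank w 0 = 0" and sum_0: "(\<Sum>t=1..<k. Suc (length (\<pi> t)) * E t) = 0"
    by linarith+
  show ?thesis
  proof (cases "t = 1")
    case True
    then show ?thesis
      using \<open>conj_rank w 0 = 0\<close> conj_rank_letter_pos[of 1] assms by (simp add: letter_pos_def)
  next
    case False
    then have "t - 1 \<in> {1..<k}" and t: "Suc (t - 1) = t"
      using assms by auto
    then have "E (t - 1) = 0"
      using sum_0 by simp
    then show ?thesis
      unfolding E_def t by simp
  qed
qed

end

theorem corollary6p3:
  fixes w :: "'a::linorder list" and k :: nat and a :: "nat \<Rightarrow> 'a" and \<pi> :: "nat \<Rightarrow> 'a list"
  assumes "perfectly_clustering w"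
    and "palindromic_special_factorization w k a \<pi>"
  shows "\<forall>s\<in>{1..<k}. (\<pi> s = [] \<longleftrightarrow>
           (\<Sum>i=1..s. count_list w (a i)) = (\<Sum>i=s+1..k. count_list w (a i)))"
proof
  fix s
  assume "s \<in> {1..<k}"
  then have s: "1 \<le> s" "s < k"
    by auto
  note sf = palindromic_special_factorizationD(1)[OF assms(2)]
  have "\<pi> s = [] \<longleftrightarrow> conj_rank w (Suc (letter_pos \<pi> s)) = conj_rank w (letter_pos \<pi> (Suc s))"
    using Nil_iff_conj_rank_eq[OF assms s] .
  also have "\<dots> \<longleftrightarrow> length (filter (\<lambda>c. a s < c) w) = length (filter (\<lambda>c. c < a (Suc s)) w)"
    using conj_rank_Suc_letter_pos[OF assms, of s] conj_rank_letter_pos[OF assms, of "Suc s"]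
      letter_rank_letter_pos_eq_0[OF assms] s
    by simp
  finally show "\<pi> s = [] \<longleftrightarrow>
      (\<Sum>i=1..s. count_list w (a i)) = (\<Sum>i=s+1..k. count_list w (a i))"
    using length_filter_less_letter[OF sf s(2)] length_filter_greater_letter[OF sf s(1)] s
    by auto
qed

end
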